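(* Let $q\ge 2$, let $(R_i)_{i\ge1}$ be reals with $R_i\to\infty$, and let $n_i\to\infty$. For every $i$ let $\mathcal C_i$ be an ID code for $\Pi^q_{n_i}$ with $M_i\ge 2^{R_i n_i^{q-1}}$ messages and type-I and type-II error probabilities $\lambda_{1,i},\lambda_{2,i}$. Then $\liminf_{i\to\infty}(\lambda_{1,i}+\lambda_{2,i})\ge 1$.
   Context: Fix an integer $q\ge 2$ and let $\mathcal A_q=\{1,\dots,q\}$. For $n\ge 1$, $S_n$ is the symmetric group on $\{1,\dots,n\}$, and for $\mathbf x\in\mathcal A_q^n$, $\sigma\in S_n$, we write $\sigma\mathbf x=(x_{\sigma^{-1}(1)},\dots,x_{\sigma^{-1}(n)})$. The $n$-block $q$-ary uniform permutation channel $\Pi^q_n$ has input and output alphabet $\mathcal A_q^n$ and transition probabilities $\Pi^q_n(\mathbf y\mid\mathbf x)=\frac{1}{n!}\sum_{\sigma\in S_n}\mathbf 1\{\mathbf y=\sigma\mathbf x\}$; $\Pi^q$ denotes the family $(\Pi^q_n)_{n\ge1}$. An ID code (with deterministic decoders) with $M$ messages for $\Pi^q_n$ (an "$(n,M,\lambda_1,\lambda_2)$ ID code") is a family $\{(Q_i,\mathcal D_i)\}_{i=1}^M$ where each $Q_i$ is a probability distribution on $\mathcal A_q^n$ (the stochastic encoder of message $i$) and $\mathcal D_i\subseteq\mathcal A_q^n$ (the acceptance region of message $i$). Its error probabilities are $\lambda_{i\to j}=\sum_{\mathbf x}Q_i(\mathbf x)\sum_{\mathbf y\in\mathcal D_j}\Pi^q_n(\mathbf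 y\mid\mathbf x)$ for $i\ne j$ and $\lambda_{i\not\to i}=\sum_{\mathbf x}Q_i(\mathbf x)\sum_{\mathbf y\notin\mathcal D_i}\Pi^q_n(\mathbf y\mid\mathbf x)$; the type-I error probability is $\lambda_1=\max_i\lambda_{i\not\to i}$ and the type-II error probability is $\lambda_2=\max_{i\ne j}\lambda_{i\to j}$. *)

theory Defs
  imports "HOL-Analysis.Analysis" "HOL-Combinatorics.Permutations" "HOL-Library.Extended_Real"
begin

text \<open>Words of length n over the alphabet {1..q}, represented as lists
  (position k of the list is coordinate k+1).\<close>
definition words :: "nat \<Rightarrow> nat \<Rightarrow> nat list set" where
  "words q n = {xs. length xs = n \<and> set xs \<subseteq> {1..q}}"

definition perm_word :: "nat \<Rightarrow> (nat \<Rightarrow> nat) \<Rightarrow> nat list \<Rightarrow> nat list" where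
  "perm_word n \<sigma> xs = map (\<lambda>k. xs ! (inv \<sigma> k)) [0..<n]"

definition perm_channel :: "nat \<Rightarrow> nat list \<Rightarrow> nat list \<Rightarrow> real" where
  "perm_channel n y x =
     real (card {\<sigma>. \<sigma> permutes {0..<n} \<and> y = perm_word n \<sigma> x}) / fact n"

text \<open>An (n, M) ID code with messages 0..<M: stochastic encoders Q i (probability
  distributions on words q n) and acceptance regions D i \<subseteq> words q n.\<close>
definition is_ID_code ::
  "nat \<Rightarrow> nat \<Rightarrow> nat \<Rightarrow> (nat \<Rightarrow> nat list \<Rightarrow> real) \<Rightarrow> (nat \<Rightarrow> nat list set) \<Rightarrow> bool" where
  "is_ID_code q n M Q D \<longleftrightarrow>
     (\<forall>i<M. (\<forall>x\<in>words q n. Q i x \<ge> 0) \<and> (\<Sum>x\<in>words q n. Q i x) = 1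
            \<and> D i \<subseteq> words q n)"

definition err_to :: "nat \<Rightarrow> nat \<Rightarrow> (nat \<Rightarrow> nat list \<Rightarrow> real) \<Rightarrow> (nat \<Rightarrow> nat list set)
    \<Rightarrow> nat \<Rightarrow> nat \<Rightarrow> real" where
  "err_to q n Q D i j =
     (\<Sum>x\<in>words q n. Q i x * (\<Sum>y\<in>D j. perm_channel n y x))"

definition err_not :: "nat \<Rightarrow> nat \<Rightarrow> (nat \<Rightarrow> nat list \<Rightarrow> real) \<Rightarrow> (nat \<Rightarrow> nat list set)
    \<Rightarrow> nat \<Rightarrow> real" where
  "err_not q n Q D i =
     (\<Sum>x\<in>words q n. Q i x * (\<Sum>y\<in>words q n - D i. perm_channel n y x))"

text \<open>Type-II error: max over ordered pairs of
  distinct messages (0 is inserted only to make Max well-defined when M = 1;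
  all error terms are nonnegative so this changes nothing when M \<ge> 2).\<close>
definition type1_err :: "nat \<Rightarrow> nat \<Rightarrow> nat \<Rightarrow> (nat \<Rightarrow> nat list \<Rightarrow> real) \<Rightarrow> (nat \<Rightarrow> nat list set) \<Rightarrow> real" where
  "type1_err q n M Q D = Max ((\<lambda>i. err_not q n Q D i) ` {0..<M})"

definition type2_err :: "nat \<Rightarrow> nat \<Rightarrow> nat \<Rightarrow> (nat \<Rightarrow> nat list \<Rightarrow> real) \<Rightarrow> (nat \<Rightarrow> nat list set) \<Rightarrow> real" where
  "type2_err q n M Q D =
     Max (insert 0 {err_to q n Q D i j | i j. i < M \<and> j < M \<and> i \<noteq> j})"

end

theory Submission
  imports Defs
begin

text \<open>
  The permutation channel sees its input only through its type, the multiset of its letters, and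
  there are at most T = (n + 1)^(q - 1) types. So message i induces a probability vector P i on the
  types, and the errors satisfy
  err_not i + err_to j i = 1 - (sum over types t of (P i t - P j t) * G i t) with 0 <= G i t <= 1.
  Rounding each P i down to the grid 1/N leaves at most 2^(N + T) possible rounded vectors; with more
  messages than that, two of them round alike, and for this pair the errors add up to at least
  1 - T/N. Taking N about T/epsilon, the count 2^(N + T) is 2^(O(n^(q-1)/epsilon)), which is
  eventually below M >= 2^(R n^(q-1)) since R tends to infinity.
\<close>

lemma
  fixes T N :: nat
  shows finite_sum_list_le: "finite {ks::nat list. length ks = T \<and> sum_list ks \<le> N}"
    and card_sum_list_le: "card {ks::nat list. length ks = T \<and> sum_list ks \<le> N} \<le> 2 ^ (N + T)"
proof -
  let ?S = "{ks::nat list. length ks = T \<and> sum_list ks \<le> N}"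
  let ?U = "{ks::nat list. length ks = Suc T \<and> sum_list ks = N}"
  let ?slack = "\<lambda>ks. (N - sum_list ks) # ks"
  have card_U: "card ?U = (N + T) choose N"
    using card_length_sum_list[of "Suc T" N] by simp
  then have fin_U: "finite ?U" by (intro card_ge_0_finite) simp
  have inj: "inj_on ?slack ?S" by (rule inj_onI) simp
  have into_U: "?slack ` ?S \<subseteq> ?U" by auto
  show "finite ?S"
    using finite_imageD[OF finite_subset[OF into_U fin_U] inj] .
  have "card ?S \<le> card ?U"
    using card_inj_on_le[OF inj into_U fin_U] .
  then show "card ?S \<le> 2 ^ (N + T)"
    using binomial_le_pow2[of "N + T" N] card_U by simp
qed

lemma pigeonhole_close_distributions:
  fixes P :: "nat \<Rightarrow> 'a \<Rightarrow> real" and N M :: nat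
  assumes "finite T" "N > 0" "2 ^ (N + card T) < M"
    and nonneg: "\<And>m t. m < M \<Longrightarrow> t \<in> T \<Longrightarrow> 0 \<le> P m t"
    and total: "\<And>m. m < M \<Longrightarrow> (\<Sum>t\<in>T. P m t) \<le> 1"
  obtains i j where "i < M" "j < M" "i \<noteq> j" "\<And>t. t \<in> T \<Longrightarrow> \<bar>P i t - P j t\<bar> < 1 / N"
proof -
  obtain ts where ts: "set ts = T" "distinct ts"
    using finite_distinct_list[OF assms(1)] by blast
  define level where "level m t = nat \<lfloor>P m t * N\<rfloor>" for m t
  let ?S = "{ks::nat list. length ks = card T \<and> sum_list ks \<le> N}"
  have "map (level m) ts \<in> ?S" if "m < M" for m
  proof -
    have "real (sum_list (map (level m) ts)) = (\<Sum>t\<in>T. real (level m t))"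
      using sum_list_distinct_conv_sum_set[OF ts(2)] ts(1) by (metis of_nat_sum)
    also have "\<dots> \<le> (\<Sum>t\<in>T. P m t * N)"
      unfolding level_def using nonneg[OF that] by (intro sum_mono) simp
    also have "\<dots> \<le> N"
      using total[OF that] \<open>N > 0\<close> by (simp add: sum_distrib_right[symmetric])
    finally show ?thesis using ts distinct_card[OF ts(2)] by simp
  qed
  then have "card ((\<lambda>m. map (level m) ts) ` {..<M}) \<le> card ?S"
    by (intro card_mono finite_sum_list_le) auto
  also have "\<dots> < card {..<M}"
    using le_less_trans[OF card_sum_list_le assms(3)] by simp
  finally have "\<not> inj_on (\<lambda>m. map (level m) ts) {..<M}"
    using card_image by fastforce
  then obtain i j where ij: "i < M" "j < M" "i \<noteq> j" "map (level i) ts = map (level j) ts"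
    unfolding inj_on_def by blast
  show ?thesis
  proof (rule that[OF ij(1-3)])
    fix t assume "t \<in> T"
    then have "level i t = level j t" using ij(4) ts(1) by simp
    then have "\<lfloor>P i t * N\<rfloor> = \<lfloor>P j t * N\<rfloor>"
      unfolding level_def using nonneg ij \<open>t \<in> T\<close> by (simp add: nat_eq_iff2)
    then have "\<bar>P i t * N - P j t * N\<bar> < 1"
      by linarith
    then have "\<bar>P i t - P j t\<bar> * N < 1"
      by (simp add: abs_mult flip: left_diff_distrib)
    then show "\<bar>P i t - P j t\<bar> < 1 / N"
      using \<open>N > 0\<close> by (simp add: field_simps)
  qed
qed

lemma sum_mult_fiberwise_const_le:
  fixes d g :: "'a \<Rightarrow> real"
  assumes "finite W"
    and "\<And>x y. x \<in> W \<Longrightarrow> y \<in> W \<Longrightarrow> f x = f y \<Longrightarrow> g x = g y"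
    and "\<And>x. x \<in> W \<Longrightarrow> 0 \<le> g x \<and> g x \<le> 1"
  shows "(\<Sum>x\<in>W. d x * g x) \<le> (\<Sum>t\<in>f ` W. \<bar>\<Sum>x\<in>{x\<in>W. f x = t}. d x\<bar>)"
proof -
  have "(\<Sum>x\<in>W. d x * g x) = (\<Sum>t\<in>f ` W. \<Sum>x\<in>{x\<in>W. f x = t}. d x * g x)"
    by (rule sum.group[symmetric]) (use assms(1) in auto)
  also have "\<dots> \<le> (\<Sum>t\<in>f ` W. \<bar>\<Sum>x\<in>{x\<in>W. f x = t}. d x\<bar>)"
  proof (rule sum_mono)
    fix t assume "t \<in> f ` W"
    then obtain x0 where x0: "x0 \<in> W" "f x0 = t" by blast
    have "(\<Sum>x\<in>{x\<in>W. f x = t}. d x * g x) = g x0 * (\<Sum>x\<in>{x\<in>W. f x = t}. d x)"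
      unfolding sum_distrib_left
    proof (intro sum.cong refl)
      fix x assume "x \<in> {x\<in>W. f x = t}"
      then have "g x = g x0" using x0 by (intro assms(2)) auto
      then show "d x * g x = g x0 * d x" by simp
    qed
    also have "\<dots> \<le> g x0 * \<bar>\<Sum>x\<in>{x\<in>W. f x = t}. d x\<bar>"
      using assms(3)[OF x0(1)] by (intro mult_left_mono) auto
    also have "\<dots> \<le> \<bar>\<Sum>x\<in>{x\<in>W. f x = t}. d x\<bar>"
      using assms(3)[OF x0(1)] by (intro mult_left_le_one_le) auto
    finally show "(\<Sum>x\<in>{x\<in>W. f x = t}. d x * g x) \<le> \<bar>\<Sum>x\<in>{x\<in>W. f x = t}. d x\<bar>" .
  qed
  finally show ?thesis .
qed

lemma exists_quantization_level:
  fixes m \<epsilon> R :: real and e :: nat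
  assumes "m \<ge> 1" "\<epsilon> > 0" "R > 2 ^ e * (1 / \<epsilon> + 1) + 1"
  shows "\<exists>N::nat. 0 < N \<and> (m + 1) ^ e / N \<le> \<epsilon> \<and> N + (m + 1) ^ e < R * m ^ e"
proof -
  define A where "A = (m + 1) ^ e"
  define N where "N = nat \<lceil>A / \<epsilon>\<rceil>"
  have "A \<ge> 1" using assms(1) unfolding A_def by simp
  then have N_ge: "N \<ge> A / \<epsilon>" and N_less: "N < A / \<epsilon> + 1" and "A / \<epsilon> > 0"
    using assms(2) unfolding N_def by (linarith, simp add: less_ceiling_iff[symmetric], simp)
  then have N_pos: "N > 0" by linarith
  moreover have "A / N \<le> \<epsilon>"
    using N_ge N_pos assms(2) by (simp add: field_simps)
  moreover have "N + A < R * m ^ e"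
  proof -
    have A_le: "A \<le> 2 ^ e * m ^ e"
      using assms(1) power_mono[of "m + 1" "2 * m" e] unfolding A_def by (simp add: power_mult_distrib)
    have m_pow: "m ^ e \<ge> 1" using assms(1) by simp
    have "N + A < A * (1 / \<epsilon> + 1) + 1"
      using N_less by (simp add: field_simps)
    also have "\<dots> \<le> 2 ^ e * m ^ e * (1 / \<epsilon> + 1) + m ^ e"
      using A_le m_pow assms(2) by (intro add_mono mult_right_mono) auto
    also have "\<dots> = m ^ e * (2 ^ e * (1 / \<epsilon> + 1) + 1)"
      by (simp add: algebra_simps)
    also have "\<dots> \<le> R * m ^ e"
      using assms(3) m_pow by (simp add: mult.commute)
    finally show ?thesis .
  qed
  ultimately show ?thesis unfolding A_def by (intro exI[of _ N]) simp
qed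

lemma finite_words: "finite (words q n)"
proof -
  have "words q n = {xs. set xs \<subseteq> {1..q} \<and> length xs = n}"
    by (auto simp: words_def)
  then show ?thesis using finite_lists_length_eq[of "{1..q}" n] by simp
qed

lemma perm_word_in_words:
  assumes "x \<in> words q n" "\<sigma> permutes {0..<n}"
  shows "perm_word n \<sigma> x \<in> words q n"
proof -
  have "inv \<sigma> k < n" if "k < n" for k
    using permutes_in_image[OF permutes_inv[OF assms(2)], of k] that by auto
  then show ?thesis using assms(1) unfolding words_def perm_word_def by (auto simp: subset_iff)
qed

lemma perm_channel_nonneg: "perm_channel n y x \<ge> 0"
  by (simp add: perm_channel_def)

lemma sum_perm_channel:
  assumes "x \<in> words q n"
  shows "(\<Sum>y\<in>words q n. perm_channel n y x) = 1"
proof -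
  let ?P = "{\<sigma>. \<sigma> permutes {0..<n}}"
  have "(\<Sum>y\<in>words q n. real (card {\<sigma>. \<sigma> permutes {0..<n} \<and> y = perm_word n \<sigma> x}))
      = (\<Sum>y\<in>words q n. \<Sum>\<sigma>\<in>{\<sigma>\<in>?P. perm_word n \<sigma> x = y}. 1)"
    by (intro sum.cong refl) (simp add: Collect_conj_eq[symmetric] eq_commute[of _ "perm_word n _ x"] conj_ac)
  also have "\<dots> = (\<Sum>\<sigma>\<in>?P. 1)"
    using perm_word_in_words[OF assms]
    by (intro sum.group finite_words) (auto intro: finite_permutations)
  also have "\<dots> = fact n"
    using card_permutations[of "{0..<n}" n] by simp
  finally show ?thesis
    unfolding perm_channel_def by (simp add: sum_divide_distrib[symmetric])
qed

lemma sum_perm_channel_le_1: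
  assumes "D \<subseteq> words q n" "x \<in> words q n"
  shows "(\<Sum>y\<in>D. perm_channel n y x) \<le> 1"
proof -
  have "(\<Sum>y\<in>D. perm_channel n y x) \<le> (\<Sum>y\<in>words q n. perm_channel n y x)"
    using assms(1) by (intro sum_mono2 finite_words) (auto simp: perm_channel_nonneg)
  then show ?thesis using sum_perm_channel[OF assms(2)] by simp
qed

lemma perm_word_permute_list:
  assumes "length x = n" "p permutes {..<n}" "\<sigma> permutes {0..<n}"
  shows "perm_word n \<sigma> (permute_list p x) = perm_word n (\<sigma> \<circ> inv p) x"
proof -
  have "bij p" "bij \<sigma>" using assms permutes_bij by blast+
  then have "inv (\<sigma> \<circ> inv p) = p \<circ> inv \<sigma>"
    by (simp add: o_inv_distrib bij_imp_bij_inv inv_inv_eq)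
  moreover have "inv \<sigma> k < n" if "k < n" for k
    using permutes_in_image[OF permutes_inv[OF assms(3)], of k] that by auto
  ultimately show ?thesis
    unfolding perm_word_def using assms by (auto simp: permute_list_nth)
qed

lemma perm_channel_le_of_mset_eq:
  assumes "length x' = n" "mset x = mset x'"
  shows "perm_channel n y x \<le> perm_channel n y x'"
proof -
  obtain p where p: "p permutes {..<n}" "permute_list p x' = x"
    using mset_eq_permutation[OF assms(2)] assms(1) by metis
  have p': "p permutes {0..<n}" using p(1) by (simp add: lessThan_atLeast0)
  let ?A = "{\<sigma>. \<sigma> permutes {0..<n} \<and> y = perm_word n \<sigma> x}"
  let ?B = "{\<sigma>. \<sigma> permutes {0..<n} \<and> y = perm_word n \<sigma> x'}"
  have "inj_on (\<lambda>\<sigma>. \<sigma> \<circ> inv p) ?A"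
  proof (rule inj_onI)
    fix a b :: "nat \<Rightarrow> nat"
    assume "a \<circ> inv p = b \<circ> inv p"
    then have "a \<circ> inv p \<circ> p = b \<circ> inv p \<circ> p" by simp
    then show "a = b"
      using permutes_bij[OF p'] by (simp add: o_assoc[symmetric] bij_is_inj inv_o_cancel)
  qed
  moreover have "(\<lambda>\<sigma>. \<sigma> \<circ> inv p) ` ?A \<subseteq> ?B"
    using perm_word_permute_list[OF assms(1) p(1)] p(2) p'
    by (auto intro: permutes_compose permutes_inv)
  moreover have "finite ?B"
    using finite_permutations[of "{0..<n}"] by (auto intro: finite_subset)
  ultimately have "card ?A \<le> card ?B" by (rule card_inj_on_le)
  then show ?thesis
    unfolding perm_channel_def by (simp add: divide_right_mono)
qed

lemma perm_channel_mset_cong: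
  assumes "length x = n" "length x' = n" "mset x = mset x'"
  shows "perm_channel n y x = perm_channel n y x'"
  using perm_channel_le_of_mset_eq[OF assms(2,3)] perm_channel_le_of_mset_eq[OF assms(1) assms(3)[symmetric]]
  by (rule order_antisym)

lemma inj_on_counts_mset_words:
  assumes "q \<ge> 1"
  shows "inj_on (\<lambda>A. map (count A) [1..<q]) (mset ` words q n)"
proof (rule inj_onI, clarify)
  fix x x' assume x: "x \<in> words q n" and x': "x' \<in> words q n"
    and counts: "map (count (mset x)) [1..<q] = map (count (mset x')) [1..<q]"
  have low: "count (mset x) a = count (mset x') a" if "a \<in> {1..<q}" for a
    using counts that by simp
  have "set x \<subseteq> {1..q}" "set x' \<subseteq> {1..q}" "length x = n" "length x' = n"
    using x x' by (auto simp: words_def)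
  then have "(\<Sum>a\<in>{1..q}. count (mset x) a) = (\<Sum>a\<in>{1..q}. count (mset x') a)"
    by (simp add: count_mset sum_count_set)
  moreover have "{1..q} = insert q {1..<q}" using assms by auto
  moreover have "(\<Sum>a\<in>{1..<q}. count (mset x) a) = (\<Sum>a\<in>{1..<q}. count (mset x') a)"
    using low by (rule sum.cong[OF refl])
  ultimately have top: "count (mset x) q = count (mset x') q"
    by simp
  show "mset x = mset x'"
  proof (rule multiset_eqI)
    fix a
    show "count (mset x) a = count (mset x') a"
    proof (cases "a \<in> {1..q}")
      case True
      then show ?thesis using low top by (cases "a = q") auto
    next
      case False
      then show ?thesis using \<open>set x \<subseteq> {1..q}\<close> \<open>set x' \<subseteq> {1..q}\<close>
        by (metis count_eq_zero_iff set_mset_mset subsetD)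
    qed
  qed
qed

lemma card_mset_words_le:
  assumes "q \<ge> 1"
  shows "card (mset ` words q n) \<le> (n + 1) ^ (q - 1)"
proof -
  let ?counts = "\<lambda>A. map (count A) [1..<q]"
  have "?counts ` mset ` words q n \<subseteq> {ls. set ls \<subseteq> {0..n} \<and> length ls = q - 1}"
    unfolding words_def using count_le_length by (fastforce simp: count_mset)
  then have "card (?counts ` mset ` words q n) \<le> (n + 1) ^ (q - 1)"
    using card_mono[OF finite_lists_length_eq[of "{0..n}" "q - 1"]]
    by (fastforce simp: card_lists_length_eq)
  then show ?thesis
    using card_image[OF inj_on_counts_mset_words[OF assms]] by simp
qed

lemma err_not_add_err_to:
  assumes "is_ID_code q n M Q D" "i < M" "j < M"
  shows "err_not q n Q D i + err_to q n Q D j i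
       = 1 - (\<Sum>x\<in>words q n. (Q i x - Q j x) * (\<Sum>y\<in>D i. perm_channel n y x))"
proof -
  let ?acc = "\<lambda>x. \<Sum>y\<in>D i. perm_channel n y x"
  have D: "D i \<subseteq> words q n" and Q: "(\<Sum>x\<in>words q n. Q i x) = 1"
    using assms unfolding is_ID_code_def by auto
  have "err_not q n Q D i = (\<Sum>x\<in>words q n. Q i x * (1 - ?acc x))"
    unfolding err_not_def
    by (intro sum.cong refl) (simp add: sum_diff[OF finite_words D] sum_perm_channel)
  also have "\<dots> = 1 - (\<Sum>x\<in>words q n. Q i x * ?acc x)"
    using Q by (simp add: right_diff_distrib sum_subtractf)
  finally show ?thesis
    unfolding err_to_def by (simp add: left_diff_distrib sum_subtractf)
qed

lemma err_le_type_errs: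
  assumes "i < M" "j < M" "i \<noteq> j"
  shows "err_not q n Q D i + err_to q n Q D j i \<le> type1_err q n M Q D + type2_err q n M Q D"
proof -
  have "finite {err_to q n Q D i j | i j. i < M \<and> j < M \<and> i \<noteq> j}"
    by (rule finite_subset[of _ "(\<lambda>(i, j). err_to q n Q D i j) ` ({..<M} \<times> {..<M})"]) auto
  then have "err_to q n Q D j i \<le> type2_err q n M Q D"
    unfolding type2_err_def using assms by (intro Max_ge) auto
  moreover have "err_not q n Q D i \<le> type1_err q n M Q D"
    unfolding type1_err_def using assms by (intro Max_ge) auto
  ultimately show ?thesis by simp
qed

lemma type_errs_ge_quantization:
  fixes N :: nat
  assumes "q \<ge> 1" "is_ID_code q n M Q D" "N > 0" "2 ^ (N + (n + 1) ^ (q - 1)) < M"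
  shows "1 - real ((n + 1) ^ (q - 1)) / N \<le> type1_err q n M Q D + type2_err q n M Q D"
proof -
  let ?W = "words q n"
  let ?types = "mset ` ?W"
  define P where "P m t = (\<Sum>x\<in>{x\<in>?W. mset x = t}. Q m x)" for m t
  have card_types: "card ?types \<le> (n + 1) ^ (q - 1)"
    using card_mset_words_le[OF assms(1)] .
  have "2 ^ (N + card ?types) < M"
    using power_increasing[of "N + card ?types" _ "2::nat"] card_types assms(4)
    by (meson add_left_mono le_less_trans one_le_numeral)
  moreover have "0 \<le> P m t" if "m < M" for m t
    using assms(2) that unfolding is_ID_code_def P_def by (intro sum_nonneg) auto
  moreover have "(\<Sum>t\<in>?types. P m t) \<le> 1" if "m < M" for m
    using assms(2) that sum.group[OF finite_words[of q n] finite_imageI[OF finite_words[of q n]] subset_refl, of "Q m" mset]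
    unfolding is_ID_code_def P_def by auto
  ultimately obtain i j where ij: "i < M" "j < M" "i \<noteq> j"
    and close: "\<And>t. t \<in> ?types \<Longrightarrow> \<bar>P i t - P j t\<bar> < 1 / N"
    using pigeonhole_close_distributions[OF finite_imageI[OF finite_words] assms(3)] by metis
  have D: "D i \<subseteq> ?W" using assms(2) ij unfolding is_ID_code_def by auto
  have "(\<Sum>x\<in>?W. (Q i x - Q j x) * (\<Sum>y\<in>D i. perm_channel n y x)) \<le> (\<Sum>t\<in>?types. \<bar>P i t - P j t\<bar>)"
    unfolding P_def sum_subtractf[symmetric]
  proof (rule sum_mult_fiberwise_const_le[OF finite_words])
    show "(\<Sum>y\<in>D i. perm_channel n y x) = (\<Sum>y\<in>D i. perm_channel n y x')"
      if "x \<in> ?W" "x' \<in> ?W" "mset x = mset x'" for x x'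
      using that by (intro sum.cong refl perm_channel_mset_cong) (auto simp: words_def)
    show "0 \<le> (\<Sum>y\<in>D i. perm_channel n y x) \<and> (\<Sum>y\<in>D i. perm_channel n y x) \<le> 1"
      if "x \<in> ?W" for x
      using sum_perm_channel_le_1[OF D that] by (simp add: sum_nonneg perm_channel_nonneg)
  qed
  also have "\<dots> \<le> (\<Sum>t\<in>?types. 1 / N)"
    using close by (intro sum_mono) (simp add: less_imp_le)
  also have "\<dots> \<le> real ((n + 1) ^ (q - 1)) / N"
    using card_types by (simp add: divide_right_mono del: of_nat_Suc of_nat_power flip: of_nat_le_iff)
  finally show ?thesis
    using err_not_add_err_to[OF assms(2) ij(1,2)] err_le_type_errs[OF ij, of q n Q D] by linarith
qed

lemma type_errs_ge_of_rate:
  fixes R \<epsilon> :: real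
  assumes "q \<ge> 1" "is_ID_code q n M Q D" "n \<ge> 1" "\<epsilon> > 0"
    and "R > 2 ^ (q - 1) * (1 / \<epsilon> + 1) + 1"
    and "real M \<ge> 2 powr (R * real n ^ (q - 1))"
  shows "1 - \<epsilon> \<le> type1_err q n M Q D + type2_err q n M Q D"
proof -
  let ?A = "(n + 1) ^ (q - 1)"
  have "real ?A = (real n + 1) ^ (q - 1)" by (simp add: add.commute)
  then obtain N :: nat where N: "0 < N" "real ?A / N \<le> \<epsilon>" "N + real ?A < R * n ^ (q - 1)"
    using exists_quantization_level[where m = n and e = "q - 1"] assms(3-5) by auto
  have "real (2 ^ (N + ?A)) = 2 powr (N + real ?A)"
    by (simp add: powr_realpow[symmetric])
  also have "\<dots> < 2 powr (R * real n ^ (q - 1))"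
    using N(3) by (intro powr_less_mono) auto
  also have "\<dots> \<le> real M"
    by (rule assms(6))
  finally have "1 - real ?A / N \<le> type1_err q n M Q D + type2_err q n M Q D"
    by (intro type_errs_ge_quantization[OF assms(1,2) N(1)]) simp
  then show ?thesis
    using N(2) by linarith
qed

theorem theorem1:
  fixes q :: nat and R :: "nat \<Rightarrow> real" and n :: "nat \<Rightarrow> nat" and M :: "nat \<Rightarrow> nat"
    and Q :: "nat \<Rightarrow> nat \<Rightarrow> nat list \<Rightarrow> real" and D :: "nat \<Rightarrow> nat \<Rightarrow> nat list set"
  assumes "q \<ge> 2"
    and "filterlim R at_top sequentially"
    and "filterlim n at_top sequentially"
    and "\<And>i. is_ID_code q (n i) (M i) (Q i) (D i)"
    and "\<And>i. real (M i) \<ge> 2 powr (R i * real (n i) ^ (q - 1))"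
  shows "liminf (\<lambda>i. ereal (type1_err q (n i) (M i) (Q i) (D i)
                           + type2_err q (n i) (M i) (Q i) (D i))) \<ge> 1"
  unfolding le_Liminf_iff
proof (intro allI impI)
  fix y :: ereal assume "y < 1"
  then obtain r where r: "y < ereal r" "r < 1" using ereal_dense2 by force
  define \<epsilon> where "\<epsilon> = (1 - r) / 2"
  have "\<epsilon> > 0" "r < 1 - \<epsilon>"
    using r(2) unfolding \<epsilon>_def by (simp_all add: field_simps)
  then have "y < ereal (1 - \<epsilon>)"
    using r(1) by (simp add: less_trans)
  have "\<forall>\<^sub>F i in sequentially. 2 ^ (q - 1) * (1 / \<epsilon> + 1) + 1 < R i"
    using assms(2) unfolding filterlim_at_top_dense by blast
  moreover have "\<forall>\<^sub>F i in sequentially. 1 \<le> n i"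
    using assms(3) unfolding filterlim_at_top by blast
  ultimately show "\<forall>\<^sub>F i in sequentially. y < ereal (type1_err q (n i) (M i) (Q i) (D i)
                                                + type2_err q (n i) (M i) (Q i) (D i))"
  proof eventually_elim
    case (elim i)
    have "1 - \<epsilon> \<le> type1_err q (n i) (M i) (Q i) (D i) + type2_err q (n i) (M i) (Q i) (D i)"
      using assms(1) elim \<open>\<epsilon> > 0\<close> by (intro type_errs_ge_of_rate[OF _ assms(4) _ _ _ assms(5)]) auto
    with \<open>y < ereal (1 - \<epsilon>)\<close> show ?case
      by (simp add: less_le_trans)
  qed
qed

end
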